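(* Let $\Gamma=([n],E)$ be a connected simple graph. Then the polytopes $$Q_{\Gamma}=\sum_{\substack{S\subseteq[n]\\ \Gamma|_S\text{ connected}}}\Delta_S\qquad\text{and}\qquad Q^L_{\Gamma}=\sum_{\substack{S\subseteq[n]\\ \Gamma|_S\cong L_{|S|}}}\Delta_S$$ are normally equivalent, i.e. their normal fans coincide.
   Context: $L_r$ is the path graph on $r$ vertices and $\Gamma|_S$ is the induced subgraph on $S$; the sums are Minkowski sums over nonempty subsets $S$. For nonempty $S\subseteq[n]$, $\Delta_S=\mathrm{conv}\{e_s:s\in S\}\subset\mathbb{R}^n$, where $e_s$ are the standard basis vectors. *)

theory Defs
  imports "HOL-Analysis.Analysis" "HOL-Library.Set_Algebras"
begin

text \<open>A simple graph on the finite vertex type 'n (playing the role of [n]) is given by an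
  edge relation E that is symmetric and irreflexive.\<close>
definition simple_graph :: "('n \<Rightarrow> 'n \<Rightarrow> bool) \<Rightarrow> bool" where
  "simple_graph E \<longleftrightarrow> (\<forall>u v. E u v \<longrightarrow> E v u) \<and> (\<forall>v. \<not> E v v)"

definition induced_connected :: "('n \<Rightarrow> 'n \<Rightarrow> bool) \<Rightarrow> 'n set \<Rightarrow> bool" where
  "induced_connected E S \<longleftrightarrow> S \<noteq> {} \<and>
     (\<forall>u\<in>S. \<forall>v\<in>S. (\<lambda>x y. x \<in> S \<and> y \<in> S \<and> E x y)\<^sup>*\<^sup>* u v)"

definition connected_graph :: "('n \<Rightarrow> 'n \<Rightarrow> bool) \<Rightarrow> bool" where
  "connected_graph E \<longleftrightarrow> induced_connected E UNIV"

definition path_graph_edge :: "nat \<Rightarrow> nat \<Rightarrow> bool" where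
  "path_graph_edge i j \<longleftrightarrow> i + 1 = j \<or> j + 1 = i"

definition induced_path :: "('n \<Rightarrow> 'n \<Rightarrow> bool) \<Rightarrow> 'n set \<Rightarrow> bool" where
  "induced_path E S \<longleftrightarrow> S \<noteq> {} \<and>
     (\<exists>f. bij_betw f {0..<card S} S \<and>
          (\<forall>i<card S. \<forall>j<card S. E (f i) (f j) \<longleftrightarrow> path_graph_edge i j))"

definition simplex_of :: "'n set \<Rightarrow> (real ^ 'n::finite) set" where
  "simplex_of S = convex hull ((\<lambda>s. axis s 1) ` S)"

definition Q_graph :: "('n::finite \<Rightarrow> 'n \<Rightarrow> bool) \<Rightarrow> (real ^ 'n) set" where
  "Q_graph E = (\<Sum>S\<in>{S. induced_connected E S}. simplex_of S)"

definition QL_graph :: "('n::finite \<Rightarrow> 'n \<Rightarrow> bool) \<Rightarrow> (real ^ 'n) set" where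
  "QL_graph E = (\<Sum>S\<in>{S. induced_path E S}. simplex_of S)"

definition normal_cone :: "(real ^ 'n) set \<Rightarrow> (real ^ 'n) set \<Rightarrow> (real ^ 'n) set" where
  "normal_cone P F = {w. \<forall>x\<in>F. \<forall>y\<in>P. inner w y \<le> inner w x}"

definition normal_fan :: "(real ^ 'n) set \<Rightarrow> (real ^ 'n) set set" where
  "normal_fan P = {normal_cone P F | F. F face_of P \<and> F \<noteq> {}}"

definition normally_equivalent :: "(real ^ 'n) set \<Rightarrow> (real ^ 'n) set \<Rightarrow> bool" where
  "normally_equivalent P Q \<longleftrightarrow> normal_fan P = normal_fan Q"

end

theory Submission
  imports Defs
begin

(* The normal fan of a nonempty polytope P is determined by the preorder on directions
   "the face of P maximising w lies in the face maximising w'". For a Minkowski sum the face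
   maximising w is the sum of the summands' faces maximising w, so the preorder of a sum is
   the intersection of the preorders of the summands; for a simplex Delta_S the face
   maximising w is Delta_T, where T is the set of coordinates in S at which w is largest.
   So it suffices to show: if argmax_S w is contained in argmax_S w' for every induced path S,
   then also for every connected S. Given s in argmax_S w and t in S, a shortest s-t walk in
   the subgraph induced on S is an induced path P containing s and t; s maximises w on P,
   hence maximises w' on P, so w'_t <= w'_s. *)

section \<open>Faces maximising a linear functional\<close>

definition maximizers :: "'a::real_inner set \<Rightarrow> 'a \<Rightarrow> 'a set" where
  "maximizers P w = {x\<in>P. \<forall>y\<in>P. w \<bullet> y \<le> w \<bullet> x}"

lemma maximizers_subset: "maximizers P w \<subseteq> P"
  unfolding maximizers_def by blast

lemma maximizers_nonempty:
  assumes "compact P" "P \<noteq> {}"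
  shows "maximizers P w \<noteq> {}"
proof -
  have "continuous_on P (\<lambda>x. w \<bullet> x)"
    by (intro continuous_intros)
  then obtain x where "x \<in> P" "\<forall>y\<in>P. w \<bullet> y \<le> w \<bullet> x"
    using continuous_attains_sup[of P "\<lambda>x. w \<bullet> x"] assms by blast
  then show ?thesis unfolding maximizers_def by blast
qed

lemma maximizers_face_of:
  assumes "convex P"
  shows "maximizers P w face_of P"
proof (cases "maximizers P w = {}")
  case False
  then obtain x where x: "x \<in> maximizers P w" by blast
  then have "maximizers P w = P \<inter> {y. w \<bullet> y = w \<bullet> x}"
    unfolding maximizers_def by (auto intro: order.antisym)
  moreover have "(P \<inter> {y. w \<bullet> y = w \<bullet> x}) face_of P"
    using assms x by (intro face_of_Int_supporting_hyperplane_le) (auto simp: maximizers_def)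
  ultimately show ?thesis by simp
qed simp

lemma face_of_polyhedron_eq_maximizers:
  fixes P :: "'a::euclidean_space set"
  assumes "polyhedron P" "F face_of P" "F \<noteq> {}"
  obtains w where "F = maximizers P w"
proof -
  have "F exposed_face_of P"
    using assms(1,2) exposed_face_of_polyhedron by blast
  then obtain a b where le: "P \<subseteq> {x. a \<bullet> x \<le> b}" and F: "F = P \<inter> {x. a \<bullet> x = b}"
    unfolding exposed_face_of_def by blast
  obtain z where z: "z \<in> F" using assms(3) by blast
  have "maximizers P a \<subseteq> F"
  proof
    fix x assume x: "x \<in> maximizers P a"
    \<comment> \<open>the bound b is attained on P, at z\<close>
    have "b \<le> a \<bullet> x" "a \<bullet> x \<le> b"
      using x z le unfolding F maximizers_def by auto
    then show "x \<in> F"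
      using x unfolding F maximizers_def by auto
  qed
  moreover have "F \<subseteq> maximizers P a"
    using le unfolding F maximizers_def by auto
  ultimately show ?thesis
    using that by blast
qed

lemma normal_cone_eq_maximizers:
  "F \<subseteq> P \<Longrightarrow> normal_cone P F = {w. F \<subseteq> maximizers P w}"
  unfolding normal_cone_def maximizers_def by auto

lemma normal_fan_eq_maximizers:
  assumes "polytope P" "P \<noteq> {}"
  shows "normal_fan P = range (\<lambda>w. {w'. maximizers P w \<subseteq> maximizers P w'})"
proof -
  have "normal_cone P F \<in> range (\<lambda>w. {w'. maximizers P w \<subseteq> maximizers P w'})"
    if face: "F face_of P" "F \<noteq> {}" for F
  proof -
    obtain w where "F = maximizers P w"
      by (rule face_of_polyhedron_eq_maximizers[OF polytope_imp_polyhedron[OF assms(1)] face])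
    then show ?thesis
      using normal_cone_eq_maximizers[OF maximizers_subset] by blast
  qed
  moreover have "{w'. maximizers P w \<subseteq> maximizers P w'} \<in> normal_fan P" for w
  proof -
    have "maximizers P w face_of P"
      using assms(1) by (intro maximizers_face_of polytope_imp_convex)
    moreover have "maximizers P w \<noteq> {}"
      using assms by (intro maximizers_nonempty polytope_imp_compact)
    moreover have "normal_cone P (maximizers P w) = {w'. maximizers P w \<subseteq> maximizers P w'}"
      by (rule normal_cone_eq_maximizers[OF maximizers_subset])
    ultimately show ?thesis
      unfolding normal_fan_def by blast
  qed
  ultimately show ?thesis
    unfolding normal_fan_def by blast
qed

lemma normally_equivalent_if_same_face_order:
  assumes "polytope P" "P \<noteq> {}" "polytope Q" "Q \<noteq> {}"
    and "\<And>w w'. maximizers P w \<subseteq> maximizers P w' \<longleftrightarrow> maximizers Q w \<subseteq> maximizers Q w'"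
  shows "normally_equivalent P Q"
  unfolding normally_equivalent_def normal_fan_eq_maximizers[OF assms(1,2)]
    normal_fan_eq_maximizers[OF assms(3,4)] assms(5) ..

section \<open>Minkowski sums\<close>

lemma maximizers_set_plusD:
  assumes "a \<in> A" "b \<in> B" "a + b \<in> maximizers (A + B) w"
  shows "a \<in> maximizers A w" "b \<in> maximizers B w"
proof -
  have le: "w \<bullet> a' + w \<bullet> b' \<le> w \<bullet> a + w \<bullet> b" if "a' \<in> A" "b' \<in> B" for a' b'
  proof -
    have "a' + b' \<in> A + B" using that by (rule set_plus_intro)
    then have "w \<bullet> (a' + b') \<le> w \<bullet> (a + b)"
      using assms(3) unfolding maximizers_def by blast
    then show ?thesis by (simp add: inner_add_right)
  qed
  show "a \<in> maximizers A w"
    unfolding maximizers_def using assms(1) le[of _ b] assms(2) by simp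
  show "b \<in> maximizers B w"
    unfolding maximizers_def using assms(2) le[of a] assms(1) by simp
qed

lemma maximizers_set_plus: "maximizers (A + B) w = maximizers A w + maximizers B w"
proof
  show "maximizers (A + B) w \<subseteq> maximizers A w + maximizers B w"
  proof
    fix x assume x: "x \<in> maximizers (A + B) w"
    then have "x \<in> A + B" by (rule maximizers_subset[THEN subsetD])
    then obtain a b where "a \<in> A" "b \<in> B" and x_eq: "x = a + b"
      by (rule set_plus_elim)
    then have "a \<in> maximizers A w" "b \<in> maximizers B w"
      using x maximizers_set_plusD[of a A b B w] by simp_all
    then show "x \<in> maximizers A w + maximizers B w"
      unfolding x_eq by (rule set_plus_intro)
  qed
  show "maximizers A w + maximizers B w \<subseteq> maximizers (A + B) w"
  proof
    fix x assume "x \<in> maximizers A w + maximizers B w"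
    then obtain a b where a: "a \<in> maximizers A w" and b: "b \<in> maximizers B w" and x: "x = a + b"
      by (rule set_plus_elim)
    have "a + b \<in> A + B"
      using a b maximizers_subset by (blast intro: set_plus_intro)
    moreover have "w \<bullet> y \<le> w \<bullet> (a + b)" if y: "y \<in> A + B" for y
    proof -
      obtain a' b' where "a' \<in> A" "b' \<in> B" "y = a' + b'"
        using y by (rule set_plus_elim)
      then show ?thesis
        using a b unfolding maximizers_def by (simp add: inner_add_right add_mono)
    qed
    ultimately show "x \<in> maximizers (A + B) w"
      unfolding maximizers_def x by blast
  qed
qed

lemma maximizers_set_plus_subset_iff:
  assumes "maximizers A w \<noteq> {}" "maximizers B w \<noteq> {}"
  shows "maximizers (A + B) w \<subseteq> maximizers (A + B) w' \<longleftrightarrow>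
    maximizers A w \<subseteq> maximizers A w' \<and> maximizers B w \<subseteq> maximizers B w'"
proof
  assume sub: "maximizers (A + B) w \<subseteq> maximizers (A + B) w'"
  obtain a0 b0 where a0: "a0 \<in> maximizers A w" and b0: "b0 \<in> maximizers B w"
    using assms by blast
  have "a \<in> maximizers A w'" if a: "a \<in> maximizers A w" for a
  proof -
    have "a + b0 \<in> maximizers (A + B) w'"
      using a b0 sub unfolding maximizers_set_plus by (blast intro: set_plus_intro)
    then show ?thesis
      using a b0 maximizers_subset by (blast intro: maximizers_set_plusD)
  qed
  moreover have "b \<in> maximizers B w'" if b: "b \<in> maximizers B w" for b
  proof -
    have "a0 + b \<in> maximizers (A + B) w'"
      using a0 b sub unfolding maximizers_set_plus by (blast intro: set_plus_intro)
    then show ?thesis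
      using a0 b maximizers_subset by (blast intro: maximizers_set_plusD)
  qed
  ultimately show "maximizers A w \<subseteq> maximizers A w' \<and> maximizers B w \<subseteq> maximizers B w'"
    by blast
next
  assume "maximizers A w \<subseteq> maximizers A w' \<and> maximizers B w \<subseteq> maximizers B w'"
  then show "maximizers (A + B) w \<subseteq> maximizers (A + B) w'"
    unfolding maximizers_set_plus by (intro set_plus_mono2) auto
qed

lemma maximizers_zero: "maximizers {0} w = {0}"
  unfolding maximizers_def by auto

lemma maximizers_set_sum: "maximizers (\<Sum>i\<in>I. f i) w = (\<Sum>i\<in>I. maximizers (f i) w)"
  by (induction I rule: infinite_finite_induct) (simp_all add: maximizers_zero maximizers_set_plus)

lemma set_sum_nonempty: "(\<And>i. i \<in> I \<Longrightarrow> f i \<noteq> {}) \<Longrightarrow> (\<Sum>i\<in>I. f i) \<noteq> {}"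
  by (induction I rule: infinite_finite_induct) (auto simp: set_plus_def)

lemma maximizers_set_sum_subset_iff:
  assumes "finite I" "\<And>i. i \<in> I \<Longrightarrow> maximizers (f i) w \<noteq> {}"
  shows "maximizers (\<Sum>i\<in>I. f i) w \<subseteq> maximizers (\<Sum>i\<in>I. f i) w' \<longleftrightarrow>
    (\<forall>i\<in>I. maximizers (f i) w \<subseteq> maximizers (f i) w')"
  using assms
proof (induction I rule: finite_induct)
  case (insert i I)
  have "maximizers (\<Sum>i\<in>I. f i) w \<noteq> {}"
    using insert.prems by (simp add: maximizers_set_sum set_sum_nonempty)
  then show ?case
    using insert by (simp add: maximizers_set_plus_subset_iff)
qed (simp add: maximizers_zero)

section \<open>Convex hulls and simplices\<close>

lemma maximizers_convex_hull:
  fixes V :: "'a::euclidean_space set"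
  assumes "finite V"
  shows "maximizers (convex hull V) w = convex hull (maximizers V w)"
proof
  have "maximizers V w \<subseteq> maximizers (convex hull V) w"
  proof
    fix v assume v: "v \<in> maximizers V w"
    have "convex hull V \<subseteq> {y. w \<bullet> y \<le> w \<bullet> v}"
      using v unfolding maximizers_def by (intro hull_minimal) (auto simp: convex_halfspace_le)
    moreover have "v \<in> convex hull V"
      using v maximizers_subset by (blast intro: hull_inc)
    ultimately show "v \<in> maximizers (convex hull V) w"
      unfolding maximizers_def by blast
  qed
  moreover have "convex (maximizers (convex hull V) w)"
    by (rule face_of_imp_convex[OF maximizers_face_of[OF convex_convex_hull]])
  ultimately show "convex hull (maximizers V w) \<subseteq> maximizers (convex hull V) w"
    by (rule hull_minimal)
next
  obtain V' where "V' \<subseteq> V" and face: "maximizers (convex hull V) w = convex hull V'"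
    using face_of_convex_hull_subset[OF finite_imp_compact[OF assms]
        maximizers_face_of[OF convex_convex_hull]] by blast
  have "V' \<subseteq> maximizers V w"
  proof
    fix v assume "v \<in> V'"
    then have "v \<in> maximizers (convex hull V) w"
      unfolding face by (rule hull_inc)
    then show "v \<in> maximizers V w"
      using \<open>v \<in> V'\<close> \<open>V' \<subseteq> V\<close> hull_subset[of V convex] unfolding maximizers_def by blast
  qed
  then show "maximizers (convex hull V) w \<subseteq> convex hull (maximizers V w)"
    unfolding face by (rule hull_mono)
qed

lemma maximizers_convex_hull_subset_iff:
  fixes V :: "'a::euclidean_space set"
  assumes "finite V"
  shows "maximizers (convex hull V) w \<subseteq> maximizers (convex hull V) w' \<longleftrightarrow>
    maximizers V w \<subseteq> maximizers V w'"
proof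
  assume sub: "maximizers (convex hull V) w \<subseteq> maximizers (convex hull V) w'"
  show "maximizers V w \<subseteq> maximizers V w'"
  proof
    fix v assume v: "v \<in> maximizers V w"
    then have "v \<in> V" using maximizers_subset by blast
    have "v \<in> convex hull (maximizers V w)" using v by (rule hull_inc)
    then have "v \<in> maximizers (convex hull V) w'"
      using sub unfolding maximizers_convex_hull[OF assms] by blast
    then show "v \<in> maximizers V w'"
      using \<open>v \<in> V\<close> hull_subset[of V convex] unfolding maximizers_def by blast
  qed
next
  assume "maximizers V w \<subseteq> maximizers V w'"
  then show "maximizers (convex hull V) w \<subseteq> maximizers (convex hull V) w'"
    unfolding maximizers_convex_hull[OF assms] by (rule hull_mono)
qed

definition argmax_coords :: "'n set \<Rightarrow> real ^ 'n \<Rightarrow> 'n set" where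
  "argmax_coords S w = {s\<in>S. \<forall>t\<in>S. w $ t \<le> w $ s}"

lemma maximizers_axis_image:
  "maximizers ((\<lambda>s. axis s 1) ` S) w = (\<lambda>s. axis s (1::real)) ` argmax_coords S w"
  unfolding maximizers_def argmax_coords_def by (auto simp: inner_axis)

lemma maximizers_simplex_of_subset_iff:
  fixes S :: "'n::finite set"
  shows "maximizers (simplex_of S) w \<subseteq> maximizers (simplex_of S) w' \<longleftrightarrow>
    argmax_coords S w \<subseteq> argmax_coords S w'"
proof -
  have "inj (\<lambda>s::'n. axis s (1::real))"
    by (auto intro: injI simp: axis_eq_axis)
  then show ?thesis
    unfolding simplex_of_def
    by (simp add: maximizers_convex_hull_subset_iff maximizers_axis_image inj_image_subset_iff)
qed

lemma simplex_of_nonempty: "S \<noteq> {} \<Longrightarrow> simplex_of S \<noteq> {}"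
  unfolding simplex_of_def by simp

lemma maximizers_simplex_of_nonempty:
  fixes S :: "'n::finite set"
  assumes "S \<noteq> {}"
  shows "maximizers (simplex_of S) w \<noteq> {}"
proof (rule maximizers_nonempty)
  show "compact (simplex_of S)"
    unfolding simplex_of_def by (simp add: finite_imp_compact_convex_hull)
  show "simplex_of S \<noteq> {}"
    using assms by (rule simplex_of_nonempty)
qed

lemma polytope_sum_simplices:
  fixes Ss :: "'n::finite set set"
  shows "polytope (\<Sum>S\<in>Ss. simplex_of S)"
proof -
  have "(\<Sum>S\<in>Ss. simplex_of S) = convex hull (\<Sum>S\<in>Ss. (\<lambda>s. axis s (1::real)) ` S)"
    unfolding simplex_of_def by (simp add: convex_hull_set_sum)
  moreover have "finite (\<Sum>S\<in>Ss. (\<lambda>s. axis s (1::real)) ` S)"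
    by (simp add: finite_set_sum)
  ultimately show ?thesis
    unfolding polytope_def by blast
qed

lemma sum_simplices_nonempty:
  assumes "{} \<notin> Ss"
  shows "(\<Sum>S\<in>Ss. simplex_of S) \<noteq> {}"
proof (rule set_sum_nonempty)
  show "simplex_of S \<noteq> {}" if "S \<in> Ss" for S
    using that assms by (intro simplex_of_nonempty) auto
qed

lemma maximizers_sum_simplices_subset_iff:
  fixes Ss :: "'n::finite set set"
  assumes "{} \<notin> Ss"
  shows "maximizers (\<Sum>S\<in>Ss. simplex_of S) w \<subseteq> maximizers (\<Sum>S\<in>Ss. simplex_of S) w' \<longleftrightarrow>
    (\<forall>S\<in>Ss. argmax_coords S w \<subseteq> argmax_coords S w')"
proof -
  have "maximizers (simplex_of S) w \<noteq> {}" if "S \<in> Ss" for S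
    using that assms by (intro maximizers_simplex_of_nonempty) auto
  then show ?thesis
    by (simp add: maximizers_set_sum_subset_iff maximizers_simplex_of_subset_iff)
qed

lemma normally_equivalent_sum_simplices:
  fixes Ss Ts :: "'n::finite set set"
  assumes "{} \<notin> Ss" "{} \<notin> Ts"
    and "\<And>w w'. (\<forall>S\<in>Ss. argmax_coords S w \<subseteq> argmax_coords S w') \<longleftrightarrow>
      (\<forall>S\<in>Ts. argmax_coords S w \<subseteq> argmax_coords S w')"
  shows "normally_equivalent (\<Sum>S\<in>Ss. simplex_of S) (\<Sum>S\<in>Ts. simplex_of S)"
proof (rule normally_equivalent_if_same_face_order)
  show "polytope (\<Sum>S\<in>Ss. simplex_of S)" "polytope (\<Sum>S\<in>Ts. simplex_of S)"
    by (rule polytope_sum_simplices)+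
  show "(\<Sum>S\<in>Ss. simplex_of S) \<noteq> {}" "(\<Sum>S\<in>Ts. simplex_of S) \<noteq> {}"
    by (intro sum_simplices_nonempty assms(1,2))+
  show "maximizers (\<Sum>S\<in>Ss. simplex_of S) w \<subseteq> maximizers (\<Sum>S\<in>Ss. simplex_of S) w' \<longleftrightarrow>
    maximizers (\<Sum>S\<in>Ts. simplex_of S) w \<subseteq> maximizers (\<Sum>S\<in>Ts. simplex_of S) w'" for w w'
    unfolding maximizers_sum_simplices_subset_iff[OF assms(1)]
      maximizers_sum_simplices_subset_iff[OF assms(2)]
    by (rule assms(3))
qed

section \<open>Induced paths in connected vertex sets\<close>

definition walk :: "('a \<Rightarrow> 'a \<Rightarrow> bool) \<Rightarrow> 'a \<Rightarrow> 'a \<Rightarrow> 'a list \<Rightarrow> bool" where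
  "walk R s t xs \<longleftrightarrow> xs \<noteq> [] \<and> hd xs = s \<and> last xs = t \<and> successively R xs"

lemma rtranclp_imp_walk: "R\<^sup>*\<^sup>* s t \<Longrightarrow> \<exists>xs. walk R s t xs"
proof (induction rule: rtranclp_induct)
  case base
  show ?case by (intro exI[of _ "[s]"]) (simp add: walk_def)
next
  case (step y z)
  then obtain xs where "walk R s y xs" by blast
  with step.hyps(2) have "walk R s z (xs @ [z])"
    by (auto simp: walk_def successively_append_iff)
  then show ?case by blast
qed

lemma successively_shortcut:
  assumes "successively R xs" "i < j" "j < length xs" "R (xs ! i) (xs ! j)"
  shows "successively R (take (Suc i) xs @ drop j xs)"
proof -
  have "successively R (take (Suc i) xs)" "successively R (drop j xs)"
    using assms(1) append_take_drop_id successively_append_iff by metis+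
  moreover have "last (take (Suc i) xs) = xs ! i"
    using assms(2,3) by (simp add: take_Suc_conv_app_nth)
  moreover have "hd (drop j xs) = xs ! j"
    using assms(3) by (rule hd_drop_conv_nth)
  ultimately show ?thesis
    using assms(3,4) by (simp add: successively_append_iff)
qed

lemma successively_skip_cycle:
  assumes "successively R (xs @ ys @ zs)" "ys \<noteq> []" "last ys = last xs"
  shows "successively R (xs @ zs)"
  using assms by (auto simp: successively_append_iff)

lemma chordless_walk:
  assumes "R\<^sup>*\<^sup>* s t"
  obtains xs where "walk R s t xs" "distinct xs"
    "\<forall>i j. Suc i < j \<longrightarrow> j < length xs \<longrightarrow> \<not> R (xs ! i) (xs ! j)"
proof -
  obtain xs0 where "walk R s t xs0"
    using rtranclp_imp_walk[OF assms] by blast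
  define xs where "xs = arg_min length (walk R s t)"
  have xs: "walk R s t xs" and shortest: "\<And>ys. walk R s t ys \<Longrightarrow> length xs \<le> length ys"
    using arg_min_nat_lemma[of "walk R s t" xs0 length, OF \<open>walk R s t xs0\<close>]
    unfolding xs_def by blast+
  then have "xs \<noteq> []" "hd xs = s" "last xs = t" "successively R xs"
    unfolding walk_def by blast+
  \<comment> \<open>a chord or a repeated vertex would give a shorter walk\<close>
  have chordless: "\<not> R (xs ! i) (xs ! j)" if ij: "Suc i < j" "j < length xs" for i j
  proof
    assume "R (xs ! i) (xs ! j)"
    define ys where "ys = take (Suc i) xs @ drop j xs"
    have "successively R ys"
      unfolding ys_def using \<open>successively R xs\<close> _ ij(2) \<open>R (xs ! i) (xs ! j)\<close>
      by (rule successively_shortcut) (use ij in simp)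
    moreover have "ys \<noteq> []" "hd ys = s" "last ys = t"
      using ij \<open>xs \<noteq> []\<close> \<open>hd xs = s\<close> \<open>last xs = t\<close> unfolding ys_def by simp_all
    ultimately have "walk R s t ys"
      unfolding walk_def by blast
    moreover have "length ys < length xs"
      using ij unfolding ys_def by simp
    ultimately show False
      using shortest by (meson leD)
  qed
  have "distinct xs"
  proof (rule ccontr)
    assume "\<not> distinct xs"
    then obtain as y bs cs where "xs = as @ [y] @ bs @ [y] @ cs"
      using not_distinct_decomp by blast
    then have xs_eq: "xs = (as @ [y]) @ (bs @ [y]) @ cs"
      by simp
    define ys where "ys = (as @ [y]) @ cs"
    have "successively R ((as @ [y]) @ (bs @ [y]) @ cs)"
      using \<open>successively R xs\<close> by (simp only: xs_eq)
    then have "successively R ys"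
      unfolding ys_def by (rule successively_skip_cycle) simp_all
    moreover have "hd ys = hd xs" "last ys = last xs"
      unfolding ys_def xs_eq by (simp_all add: hd_append last_append)
    moreover have "ys \<noteq> []"
      unfolding ys_def by simp
    ultimately have "walk R s t ys"
      using \<open>hd xs = s\<close> \<open>last xs = t\<close> unfolding walk_def by simp
    moreover have "length ys < length xs"
      unfolding ys_def xs_eq by simp
    ultimately show False
      using shortest by (meson leD)
  qed
  then show ?thesis
    using xs chordless by (intro that) auto
qed

lemma induced_path_through:
  assumes "simple_graph E" "induced_connected E S" "s \<in> S" "t \<in> S"
  obtains P where "induced_path E P" "P \<subseteq> S" "s \<in> P" "t \<in> P"
proof -
  define R where "R = (\<lambda>x y. x \<in> S \<and> y \<in> S \<and> E x y)"
  have "R\<^sup>*\<^sup>* s t"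
    using assms(2-4) unfolding induced_connected_def R_def by blast
  then obtain xs where walk: "walk R s t xs" and "distinct xs"
    and chordless: "\<forall>i j. Suc i < j \<longrightarrow> j < length xs \<longrightarrow> \<not> R (xs ! i) (xs ! j)"
    by (rule chordless_walk)
  have sym: "E u v \<Longrightarrow> E v u" and irrefl: "\<not> E v v" for u v
    using assms(1) unfolding simple_graph_def by blast+
  have step: "R (xs ! k) (xs ! Suc k)" if "Suc k < length xs" for k
    using walk that successively_nth unfolding walk_def by fastforce
  have in_S: "xs ! k \<in> S" if "k < length xs" for k
  proof (cases k)
    case 0
    then show ?thesis using walk \<open>s \<in> S\<close> by (auto simp: walk_def hd_conv_nth)
  next
    case (Suc m)
    then show ?thesis using step[of m] that unfolding R_def by auto
  qed
  have edge_iff: "E (xs ! i) (xs ! j) \<longleftrightarrow> path_graph_edge i j"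
    if "i < length xs" "j < length xs" for i j
  proof
    assume "path_graph_edge i j"
    then show "E (xs ! i) (xs ! j)"
      using step that sym unfolding path_graph_edge_def R_def by auto
  next
    assume e: "E (xs ! i) (xs ! j)"
    then have "R (xs ! i) (xs ! j)" "R (xs ! j) (xs ! i)"
      using in_S that sym unfolding R_def by auto
    then have "\<not> Suc i < j" "\<not> Suc j < i"
      using chordless that by blast+
    moreover have "i \<noteq> j"
      using e irrefl by auto
    ultimately show "path_graph_edge i j"
      unfolding path_graph_edge_def by linarith
  qed
  have card: "card (set xs) = length xs"
    using \<open>distinct xs\<close> by (rule distinct_card)
  have "induced_path E (set xs)"
    unfolding induced_path_def card
  proof (intro conjI exI)
    show "set xs \<noteq> {}" using walk unfolding walk_def by simp
    show "bij_betw ((!) xs) {0..<length xs} (set xs)"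
      using \<open>distinct xs\<close> by (intro bij_betw_nth) auto
  qed (use edge_iff in blast)
  moreover have "s \<in> set xs" "t \<in> set xs"
    using walk unfolding walk_def by auto
  moreover have "set xs \<subseteq> S"
    using in_S by (auto simp: set_conv_nth)
  ultimately show ?thesis using that by blast
qed

lemma induced_path_imp_connected:
  assumes "simple_graph E" "induced_path E S"
  shows "induced_connected E S"
proof -
  define R where "R = (\<lambda>x y. x \<in> S \<and> y \<in> S \<and> E x y)"
  obtain f where "S \<noteq> {}" and bij: "bij_betw f {0..<card S} S"
    and edge: "\<And>i j. i < card S \<Longrightarrow> j < card S \<Longrightarrow> E (f i) (f j) \<longleftrightarrow> path_graph_edge i j"
    using assms(2) unfolding induced_path_def by blast
  have "symp R"
    using assms(1) unfolding R_def simple_graph_def symp_def by blast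
  have reach: "R\<^sup>*\<^sup>* (f 0) (f i)" if "i < card S" for i
    using that
  proof (induction i)
    case (Suc i)
    then have "R\<^sup>*\<^sup>* (f 0) (f i)"
      by simp
    moreover have "R (f i) (f (Suc i))"
      using Suc.prems bij_betwE[OF bij] edge[of i "Suc i"] unfolding R_def path_graph_edge_def by auto
    ultimately show ?case
      by (rule rtranclp.rtrancl_into_rtrancl)
  qed simp
  have "R\<^sup>*\<^sup>* u v" if "u \<in> S" "v \<in> S" for u v
  proof -
    have "u \<in> f ` {0..<card S}" "v \<in> f ` {0..<card S}"
      using that bij_betw_imp_surj_on[OF bij] by auto
    then obtain i j where "i < card S" "j < card S" "u = f i" "v = f j"
      by auto
    then have "R\<^sup>*\<^sup>* u (f 0)" "R\<^sup>*\<^sup>* (f 0) v"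
      using reach sympD[OF symp_rtranclp[OF \<open>symp R\<close>]] by blast+
    then show ?thesis
      by (rule rtranclp_trans)
  qed
  then show ?thesis
    unfolding induced_connected_def R_def using \<open>S \<noteq> {}\<close> by blast
qed

lemma argmax_coords_mono_connected_iff_paths:
  assumes "simple_graph E"
  shows "(\<forall>S. induced_connected E S \<longrightarrow> argmax_coords S w \<subseteq> argmax_coords S w') \<longleftrightarrow>
    (\<forall>S. induced_path E S \<longrightarrow> argmax_coords S w \<subseteq> argmax_coords S w')"
proof
  assume paths: "\<forall>S. induced_path E S \<longrightarrow> argmax_coords S w \<subseteq> argmax_coords S w'"
  show "\<forall>S. induced_connected E S \<longrightarrow> argmax_coords S w \<subseteq> argmax_coords S w'"
  proof (intro allI impI subsetI)
    fix S s assume conn: "induced_connected E S" and s: "s \<in> argmax_coords S w"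
    have "w' $ t \<le> w' $ s" if "t \<in> S" for t
    proof -
      have "s \<in> S"
        using s unfolding argmax_coords_def by blast
      then obtain P where P: "induced_path E P" "P \<subseteq> S" "s \<in> P" "t \<in> P"
        using induced_path_through[OF assms conn _ \<open>t \<in> S\<close>] by blast
      then have "s \<in> argmax_coords P w"
        using s unfolding argmax_coords_def by auto
      then have "s \<in> argmax_coords P w'"
        using paths P(1) by blast
      then show ?thesis
        using P(4) unfolding argmax_coords_def by auto
    qed
    then show "s \<in> argmax_coords S w'"
      using s unfolding argmax_coords_def by auto
  qed
qed (use induced_path_imp_connected[OF assms] in blast)

theorem mainTheorem7:
  fixes E :: "'n::finite \<Rightarrow> 'n \<Rightarrow> bool"
  assumes "simple_graph E" and "connected_graph E"
  shows "normally_equivalent (Q_graph E) (QL_graph E)"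
  unfolding Q_graph_def QL_graph_def
proof (rule normally_equivalent_sum_simplices)
  show "{} \<notin> {S. induced_connected E S}" "{} \<notin> {S. induced_path E S}"
    unfolding induced_connected_def induced_path_def by auto
  show "(\<forall>S\<in>{S. induced_connected E S}. argmax_coords S w \<subseteq> argmax_coords S w') \<longleftrightarrow>
    (\<forall>S\<in>{S. induced_path E S}. argmax_coords S w \<subseteq> argmax_coords S w')" for w w'
    using argmax_coords_mono_connected_iff_paths[OF assms(1)] by simp
qed

end
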